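(* Let $G$ be a layered graph over $\Sigma_{in}$ of depth $n$, $\epsilon>0$, and let $\mathsf{C}$ be an $\epsilon$-sensitive $(G,\Sigma_{out})$-code. For any $w\in\Sigma_{out}^n$, it holds that $|L_i(\mathsf{C},w,\epsilon)|\le1$ for at least $(1-\epsilon)n$ values of $i\le n$.
   Context: A layered graph over alphabet $\Sigma$ of depth $n$ is a directed graph whose vertices are partitioned into layers $0,\dots,n$, with exactly one vertex (the root) in layer $0$, and each vertex in layer $i<n$ has exactly $|\Sigma|$ out-edges to layer $i+1$ labeled by the distinct elements of $\Sigma$ (endpoints need not be distinct). A string $p\in\Sigma_{in}^i$ determines a unique root path ending at vertex $v(p)$ in layer $i$. A $(G,\Sigma_{out})$-code $\mathsf{C}$ assigns an element of $\Sigma_{out}$ to each edge; $\mathsf{C}(p)$ is the label string along $p$. Suffix distance: $\Delta_{sfx}(a,b)=\max_{0\le i\le m-1}\frac{\Delta(a[i+1:m],b[i+1:m])}{m-i}$, $\Delta$ Hamming distance. $L_i(\mathsf{C},w,\epsilon)=\{v(p):p\in\Sigma_{in}^i,\ \Delta_{sfx}(\mathsf{C}(p),w[1:i])<1-\epsilon\}$, $L(\mathsf{C},w,\epsilon)=\bigcup_{i=1}^nL_i(\mathsf{C},w,\epsilon)$. For $S\subseteq L(\mathsf{C},w,\epsilon)$, a prefix tree of $S$ is a union of paths $p(v)$ ($v\in S$) from the root to $v$, each with $\Delta_{sfx}(\mathsf{C}(p(v)),w[1:|p(v)|])<1-\epsilon$, that forms a rooted tree; $\mathcal{PT}(\mathsf{C},w,\epsilon)$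 is the set of all such prefix trees of subsets of $L(\mathsf{C},w,\epsilon)$. $agr(\mathsf{C}(H),w(H))$ is the number of edges of $H$ whose $\mathsf{C}$-label equals $w[i]$, $i$ the edge's depth. $\mathsf{C}$ is $\epsilon$-sensitive if for all $w\in\Sigma_{out}^n$ and all $PT\in\mathcal{PT}(\mathsf{C},w,\epsilon)$, $agr(\mathsf{C}(PT),w(PT))\le(1+\epsilon)n$. *)

theory Defs
  imports Complex_Main
begin

text \<open>An edge is identified
  by the pair (source vertex, input label), so parallel edges are allowed.\<close>

definition layered_graph ::
  "'a set \<Rightarrow> nat \<Rightarrow> 'v set \<Rightarrow> ('v \<Rightarrow> nat) \<Rightarrow> 'v \<Rightarrow> ('v \<Rightarrow> 'a \<Rightarrow> 'v) \<Rightarrow> bool" where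
  "layered_graph Sin n V lay r delta \<longleftrightarrow>
     r \<in> V \<and> lay r = 0 \<and>
     (\<forall>v\<in>V. lay v \<le> n) \<and>
     (\<forall>v\<in>V. lay v = 0 \<longrightarrow> v = r) \<and>
     (\<forall>v\<in>V. \<forall>a\<in>Sin. lay v < n \<longrightarrow> delta v a \<in> V \<and> lay (delta v a) = Suc (lay v))"

definition is_code ::
  "'a set \<Rightarrow> 'b set \<Rightarrow> nat \<Rightarrow> 'v set \<Rightarrow> ('v \<Rightarrow> nat) \<Rightarrow> ('v \<Rightarrow> 'a \<Rightarrow> 'b) \<Rightarrow> bool" where
  "is_code Sin Sout n V lay C \<longleftrightarrow> (\<forall>v\<in>V. \<forall>a\<in>Sin. lay v < n \<longrightarrow> C v a \<in> Sout)"

definition path_end :: "('v \<Rightarrow> 'a \<Rightarrow> 'v) \<Rightarrow> 'v \<Rightarrow> 'a list \<Rightarrow> 'v" where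
  "path_end delta v p = foldl delta v p"

fun code_word :: "('v \<Rightarrow> 'a \<Rightarrow> 'v) \<Rightarrow> ('v \<Rightarrow> 'a \<Rightarrow> 'b) \<Rightarrow> 'v \<Rightarrow> 'a list \<Rightarrow> 'b list" where
  "code_word delta C v [] = []"
| "code_word delta C v (a # p) = C v a # code_word delta C (delta v a) p"

fun path_edges :: "('v \<Rightarrow> 'a \<Rightarrow> 'v) \<Rightarrow> 'v \<Rightarrow> 'a list \<Rightarrow> ('v \<times> 'a) set" where
  "path_edges delta v [] = {}"
| "path_edges delta v (a # p) = insert (v, a) (path_edges delta (delta v a) p)"

definition hamming :: "'b list \<Rightarrow> 'b list \<Rightarrow> nat" where
  "hamming x y = card {j. j < length x \<and> j < length y \<and> x ! j \<noteq> y ! j}"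

text \<open>Suffix distance; the (unused) empty case is set to 0.\<close>
definition sfx_dist :: "'b list \<Rightarrow> 'b list \<Rightarrow> real" where
  "sfx_dist x y = (let m = length x in
     if m = 0 then 0
     else Max ((\<lambda>i. real (hamming (drop i x) (drop i y)) / real (m - i)) ` {0..<m}))"

definition L_layer ::
  "'a set \<Rightarrow> ('v \<Rightarrow> 'a \<Rightarrow> 'v) \<Rightarrow> 'v \<Rightarrow> ('v \<Rightarrow> 'a \<Rightarrow> 'b) \<Rightarrow> 'b list \<Rightarrow> real \<Rightarrow> nat \<Rightarrow> 'v set" where
  "L_layer Sin delta r C w eps i =
     {path_end delta r p | p. length p = i \<and> set p \<subseteq> Sin \<and>
        sfx_dist (code_word delta C r p) (take i w) < 1 - eps}"

definition L_all ::
  "'a set \<Rightarrow> nat \<Rightarrow> ('v \<Rightarrow> 'a \<Rightarrow> 'v) \<Rightarrow> 'v \<Rightarrow> ('v \<Rightarrow> 'a \<Rightarrow> 'b) \<Rightarrow> 'b list \<Rightarrow> real \<Rightarrow> 'v set" where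
  "L_all Sin n delta r C w eps = (\<Union>i\<in>{1..n}. L_layer Sin delta r C w eps i)"

text \<open>A set of edges forms a rooted tree (given that it is a union of root paths
  in a layered graph) iff no vertex has two distinct incoming edges.\<close>
definition tree_edges :: "('v \<Rightarrow> 'a \<Rightarrow> 'v) \<Rightarrow> ('v \<times> 'a) set \<Rightarrow> bool" where
  "tree_edges delta H \<longleftrightarrow>
     (\<forall>e1\<in>H. \<forall>e2\<in>H. delta (fst e1) (snd e1) = delta (fst e2) (snd e2) \<longrightarrow> e1 = e2)"

definition prefix_trees ::
  "'a set \<Rightarrow> nat \<Rightarrow> ('v \<Rightarrow> nat) \<Rightarrow> ('v \<Rightarrow> 'a \<Rightarrow> 'v) \<Rightarrow> 'v \<Rightarrow> ('v \<Rightarrow> 'a \<Rightarrow> 'b) \<Rightarrow>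
     'b list \<Rightarrow> real \<Rightarrow> ('v \<times> 'a) set set" where
  "prefix_trees Sin n lay delta r C w eps =
     {H. \<exists>S P. S \<subseteq> L_all Sin n delta r C w eps \<and>
        (\<forall>v\<in>S. set (P v) \<subseteq> Sin \<and> length (P v) = lay v \<and> path_end delta r (P v) = v \<and>
           sfx_dist (code_word delta C r (P v)) (take (length (P v)) w) < 1 - eps) \<and>
        H = (\<Union>v\<in>S. path_edges delta r (P v)) \<and>
        tree_edges delta H}"

text \<open>agr(C(H), w(H)): edges whose C-label equals w[i], i the edge's depth
  (an edge leaving layer k has depth k+1, i.e. is compared with w ! k).\<close>
definition agr :: "('v \<Rightarrow> nat) \<Rightarrow> ('v \<Rightarrow> 'a \<Rightarrow> 'b) \<Rightarrow> 'b list \<Rightarrow> ('v \<times> 'a) set \<Rightarrow> nat" where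
  "agr lay C w H = card {e \<in> H. C (fst e) (snd e) = w ! lay (fst e)}"

definition eps_sensitive ::
  "'a set \<Rightarrow> 'b set \<Rightarrow> nat \<Rightarrow> ('v \<Rightarrow> nat) \<Rightarrow> ('v \<Rightarrow> 'a \<Rightarrow> 'v) \<Rightarrow> 'v \<Rightarrow> ('v \<Rightarrow> 'a \<Rightarrow> 'b) \<Rightarrow> real \<Rightarrow> bool" where
  "eps_sensitive Sin Sout n lay delta r C eps \<longleftrightarrow>
     (\<forall>w. length w = n \<and> set w \<subseteq> Sout \<longrightarrow>
        (\<forall>H\<in>prefix_trees Sin n lay delta r C w eps. real (agr lay C w H) \<le> (1 + eps) * real n))"

end

theory Submission
  imports Defs
begin

(* Call a layer i crowded if L_i(C, w, eps) has at least two vertices; it suffices to show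
  that at most eps n layers are crowded.  Measure a root path p by its score, the least margin
  over its suffixes, where the margin of a suffix is its number of agreements with w minus eps
  times its length; so p is eps-close to w iff its score is positive.  Since the score of
  p @ [a] is monotone in that of p, best paths can be chosen by dynamic programming, which
  makes them prefix-closed: the best paths to the vertices of L, together with an extension Z
  of one of them to full depth, form a prefix tree.  Now change w to w' on the layers where no
  best path agrees with w, copying the label of Z there.  All chosen paths stay close to w',
  every layer carries an agreeing edge, and every crowded layer two (the last edge of a close
  path agrees with the word).  Hence the tree has at least n plus the number of crowded layers
  agreements with w', which eps-sensitivity bounds by (1 + eps) n. *)

lemma path_end_Nil [simp]: "path_end delta v [] = v"
  by (simp add: path_end_def)

lemma path_end_Cons [simp]: "path_end delta v (a # p) = path_end delta (delta v a) p"
  by (simp add: path_end_def)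

lemma path_end_snoc: "path_end delta v (p @ [a]) = delta (path_end delta v p) a"
  by (simp add: path_end_def)

lemma path_end_take_Suc:
  "t < length p \<Longrightarrow> path_end delta v (take (Suc t) p) = delta (path_end delta v (take t p)) (p ! t)"
  by (simp add: take_Suc_conv_app_nth path_end_snoc)

lemma length_code_word [simp]: "length (code_word delta C v p) = length p"
  by (induction p arbitrary: v) auto

lemma nth_code_word:
  "t < length p \<Longrightarrow> code_word delta C v p ! t = C (path_end delta v (take t p)) (p ! t)"
  by (induction p arbitrary: v t) (auto simp: nth_Cons split: nat.split)

lemma mem_path_edges_iff:
  "e \<in> path_edges delta v p \<longleftrightarrow> (\<exists>t<length p. e = (path_end delta v (take t p), p ! t))"
  by (induction p arbitrary: v) (auto simp: less_Suc_eq_0_disj)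

lemma finite_path_edges [simp]: "finite (path_edges delta v p)"
  by (induction p arbitrary: v) auto

lemma tree_edges_UN_path_edges:
  assumes "\<And>q i. q \<in> Q \<Longrightarrow> i \<le> length q \<Longrightarrow> take i q = P (path_end delta r (take i q))"
  shows "tree_edges delta (\<Union>q\<in>Q. path_edges delta r q)"
  unfolding tree_edges_def
proof (intro ballI impI)
  fix e1 e2
  assume "e1 \<in> (\<Union>q\<in>Q. path_edges delta r q)" "e2 \<in> (\<Union>q\<in>Q. path_edges delta r q)"
    and same_target: "delta (fst e1) (snd e1) = delta (fst e2) (snd e2)"
  then obtain q1 t1 q2 t2 where q: "q1 \<in> Q" "t1 < length q1" "e1 = (path_end delta r (take t1 q1), q1 ! t1)"
    "q2 \<in> Q" "t2 < length q2" "e2 = (path_end delta r (take t2 q2), q2 ! t2)"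
    by (auto simp: mem_path_edges_iff)
  then have "take (Suc t1) q1 = take (Suc t2) q2"
    using assms[of q1 "Suc t1"] assms[of q2 "Suc t2"] same_target by (simp add: path_end_take_Suc)
  moreover from this have "t1 = t2"
    using q by (metis Suc_leI length_take min.absorb2 nat.inject)
  ultimately show "e1 = e2"
    using q by (metis lessI nth_take take_take min.absorb1 less_imp_le_nat)
qed

lemma finite_L_layer: "finite Sin \<Longrightarrow> finite (L_layer Sin delta r C w eps i)"
proof -
  assume "finite Sin"
  then have "finite {p. set p \<subseteq> Sin \<and> length p = i}" by (rule finite_lists_length_eq)
  then show ?thesis
    unfolding L_layer_def by (rule finite_subset[rotated, OF finite_imageI]) (auto simp: setcompr_eq_image)
qed

lemma sum_card_fibres_le_card:
  assumes "finite A" "finite I"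
  shows "(\<Sum>t\<in>I. card {x\<in>A. g x = t}) \<le> card A"
proof -
  have "(\<Sum>t\<in>I. card {x\<in>A. g x = t}) = card (\<Union>t\<in>I. {x\<in>A. g x = t})"
    using assms by (intro card_UN_disjoint[symmetric]) auto
  also have "\<dots> \<le> card A"
    using assms by (intro card_mono) auto
  finally show ?thesis .
qed

lemma arg_max_on_if_finite:
  fixes f :: "'a \<Rightarrow> 'b::linorder"
  assumes "finite S" "S \<noteq> {}"
  shows "arg_max_on f S \<in> S \<and> (\<forall>y\<in>S. f y \<le> f (arg_max_on f S))"
proof -
  have "Max (f ` S) \<in> f ` S"
    using assms by simp
  then obtain x where "x \<in> S" "f x = Max (f ` S)"
    by auto
  have x_max: "\<not> f x < f y" if "y \<in> S" for y
  proof -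
    have "f y \<le> Max (f ` S)"
      using assms that by (intro Max_ge) auto
    with \<open>f x = Max (f ` S)\<close> show ?thesis
      by simp
  qed
  show ?thesis
    unfolding arg_max_on_def
    by (rule arg_maxI[where P = "\<lambda>z. z \<in> S" and Q = "\<lambda>z. z \<in> S \<and> (\<forall>y\<in>S. f y \<le> f z)"])
      (use \<open>x \<in> S\<close> x_max in \<open>auto simp: not_less\<close>)
qed

locale path_score =
  fixes r :: 'v and delta :: "'v \<Rightarrow> 'a \<Rightarrow> 'v" and C :: "'v \<Rightarrow> 'a \<Rightarrow> 'b" and eps :: real
begin

definition agrees :: "'b list \<Rightarrow> 'a list \<Rightarrow> nat \<Rightarrow> bool" where
  "agrees w p t \<longleftrightarrow> C (path_end delta r (take t p)) (p ! t) = w ! t"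

definition margin :: "'b list \<Rightarrow> 'a list \<Rightarrow> nat \<Rightarrow> real" where
  "margin w p j = (\<Sum>t\<in>{j..<length p}. of_bool (agrees w p t) - eps)"

text \<open>The score of the empty path is set to 0 so that the recursion \<open>score_snoc\<close> also covers
  paths of length one.\<close>
definition score :: "'b list \<Rightarrow> 'a list \<Rightarrow> real" where
  "score w p = (if p = [] then 0 else Min (margin w p ` {..<length p}))"

lemma agrees_append: "t < length p \<Longrightarrow> agrees w (p @ q) t \<longleftrightarrow> agrees w p t"
  by (simp add: agrees_def nth_append)

lemma agrees_snoc_length:
  "agrees w (p @ [a]) (length p) \<longleftrightarrow> C (path_end delta r p) a = w ! length p"
  by (simp add: agrees_def)

lemma margin_snoc:
  assumes "j \<le> length p"
  shows "margin w (p @ [a]) j =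
    margin w p j + (of_bool (C (path_end delta r p) a = w ! length p) - eps)"
proof -
  have "margin w (p @ [a]) j =
      (\<Sum>t\<in>{j..<length p}. of_bool (agrees w (p @ [a]) t) - eps)
      + (of_bool (agrees w (p @ [a]) (length p)) - eps)"
    using assms by (simp add: margin_def)
  then show ?thesis
    by (simp add: margin_def agrees_append agrees_snoc_length)
qed

lemma score_snoc:
  "score w (p @ [a]) = min (score w p) 0 + (of_bool (C (path_end delta r p) a = w ! length p) - eps)"
proof -
  define d where "d = of_bool (C (path_end delta r p) a = w ! length p) - eps"
  have "margin w (p @ [a]) ` {..<Suc (length p)} =
      insert (margin w (p @ [a]) (length p)) (margin w (p @ [a]) ` {..<length p})"
    by (simp add: lessThan_Suc)
  also have "\<dots> = insert d ((\<lambda>j. margin w p j + d) ` {..<length p})"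
    using margin_snoc[of _ p w a] by (simp add: d_def margin_def[of w p "length p"])
  finally have "score w (p @ [a]) = Min (insert d ((\<lambda>j. margin w p j + d) ` {..<length p}))"
    by (simp add: score_def)
  also have "\<dots> = min (score w p) 0 + d"
  proof (cases "p = []")
    case False
    then have "{..<length p} \<noteq> {}" by (simp add: lessThan_empty_iff)
    with False show ?thesis
      by (simp add: score_def Min_insert Min_add_commute min_add_distrib_left min.commute del: Min_le_iff)
  qed (simp add: score_def)
  finally show ?thesis
    by (simp add: d_def)
qed

lemma score_pos_iff: "p \<noteq> [] \<Longrightarrow> 0 < score w p \<longleftrightarrow> (\<forall>j<length p. 0 < margin w p j)"
  by (auto simp: score_def lessThan_empty_iff)

lemma hamming_drop_code_word:
  assumes "j \<le> length p" "length p \<le> length w"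
  shows "hamming (drop j (code_word delta C r p)) (drop j (take (length p) w)) =
    card {t\<in>{j..<length p}. \<not> agrees w p t}"
proof -
  let ?D = "{i. i < length p - j \<and> \<not> agrees w p (j + i)}"
  have "hamming (drop j (code_word delta C r p)) (drop j (take (length p) w)) = card ?D"
    using assms unfolding hamming_def by (auto simp: nth_code_word agrees_def intro!: arg_cong[where f = card])
  moreover have "{t\<in>{j..<length p}. \<not> agrees w p t} = (+) j ` ?D"
  proof (intro equalityI subsetI)
    fix t
    assume "t \<in> {t\<in>{j..<length p}. \<not> agrees w p t}"
    then show "t \<in> (+) j ` ?D"
      by (intro image_eqI[of _ _ "t - j"]) auto
  qed auto
  ultimately show ?thesis
    by (simp add: card_image)
qed

lemma margin_eq_card_disagreements:
  "margin w p j = (1 - eps) * real (length p - j) - real (card {t\<in>{j..<length p}. \<not> agrees w p t})"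
proof -
  have "margin w p j = (\<Sum>t\<in>{j..<length p}. (1 - eps) - of_bool (\<not> agrees w p t))"
    unfolding margin_def by (intro sum.cong) auto
  then show ?thesis
    by (simp add: sum_subtractf Int_def)
qed

lemma sfx_dist_less_iff_score_pos:
  assumes "p \<noteq> []" "length p \<le> length w"
  shows "sfx_dist (code_word delta C r p) (take (length p) w) < 1 - eps \<longleftrightarrow> 0 < score w p"
proof -
  let ?h = "\<lambda>j. real (hamming (drop j (code_word delta C r p)) (drop j (take (length p) w)))"
  have "sfx_dist (code_word delta C r p) (take (length p) w) < 1 - eps \<longleftrightarrow>
      (\<forall>j<length p. ?h j / real (length p - j) < 1 - eps)"
    using assms by (simp add: sfx_dist_def Let_def atLeast0LessThan lessThan_empty_iff
        del: of_nat_diff) auto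
  also have "\<dots> \<longleftrightarrow> (\<forall>j<length p. 0 < margin w p j)"
  proof (intro all_cong1 imp_cong refl)
    fix j
    assume "j < length p"
    then have "0 < real (length p - j)" by simp
    with \<open>j < length p\<close> assms(2) show "?h j / real (length p - j) < 1 - eps \<longleftrightarrow> 0 < margin w p j"
      by (simp add: pos_divide_less_eq hamming_drop_code_word margin_eq_card_disagreements)
  qed
  finally show ?thesis
    using score_pos_iff[OF assms(1)] by simp
qed

lemma score_mono:
  assumes "\<And>t. t < length p \<Longrightarrow> agrees w p t \<Longrightarrow> agrees w' p t"
  shows "score w p \<le> score w' p"
proof (cases "p = []")
  case False
  have "margin w p j \<le> margin w' p j" for j
    unfolding margin_def using assms by (intro sum_mono) auto
  have "Min (margin w p ` {..<length p}) \<le> margin w' p j" if "j < length p" for j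
  proof -
    have "Min (margin w p ` {..<length p}) \<le> margin w p j"
      using that by (intro Min_le) auto
    also have "\<dots> \<le> margin w' p j"
      by fact
    finally show ?thesis .
  qed
  with False show ?thesis
    by (simp add: score_def lessThan_empty_iff)
qed (simp add: score_def)

lemma agrees_last_if_score_pos:
  assumes "0 < eps" "0 < score w p" "length p = Suc t"
  shows "agrees w p t"
proof -
  have "score w p = score w (take t p @ [p ! t])"
    using assms(3) by (simp add: take_Suc_conv_app_nth[symmetric])
  also have "\<dots> = min (score w (take t p)) 0 +
      (of_bool (C (path_end delta r (take t p)) (p ! t) = w ! t) - eps)"
    using assms(3) by (simp add: score_snoc)
  finally have "score w p = \<dots>" .
  moreover have "min (score w (take t p)) 0 \<le> 0"
    by simp
  ultimately show ?thesis
    using assms(1,2) by (auto simp: agrees_def of_bool_def split: if_splits)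
qed

lemma score_pos_append:
  assumes "eps < 1" "0 < score w p"
    and "\<And>t. length p \<le> t \<Longrightarrow> t < length (p @ s) \<Longrightarrow> agrees w (p @ s) t"
  shows "0 < score w (p @ s)"
  using assms(3)
proof (induction s rule: rev_induct)
  case Nil
  with assms(2) show ?case by simp
next
  case (snoc a s)
  have "agrees w (p @ s) t" if "length p \<le> t" "t < length (p @ s)" for t
    using snoc.prems[of t] that agrees_append[where p = "p @ s" and q = "[a]"] by simp
  then have "0 < score w (p @ s)"
    by (rule snoc.IH)
  moreover have "C (path_end delta r (p @ s)) a = w ! length (p @ s)"
    using snoc.prems[of "length (p @ s)"] agrees_snoc_length[of w "p @ s" a] by simp
  ultimately show ?case
    using score_snoc[of w "p @ s" a] assms(1) by simp
qed

end

locale layered_code = path_score r delta C eps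
  for r :: 'v and delta :: "'v \<Rightarrow> 'a \<Rightarrow> 'v" and C :: "'v \<Rightarrow> 'a \<Rightarrow> 'b" and eps :: real +
  fixes Sin :: "'a set" and n :: nat and V :: "'v set" and lay :: "'v \<Rightarrow> nat"
  assumes finite_Sin: "finite Sin"
    and layered: "layered_graph Sin n V lay r delta"
begin

lemma path_end_in_layer:
  "length p \<le> n \<Longrightarrow> set p \<subseteq> Sin \<Longrightarrow>
    path_end delta r p \<in> V \<and> lay (path_end delta r p) = length p"
proof (induction p rule: rev_induct)
  case Nil
  with layered show ?case by (simp add: layered_graph_def)
next
  case (snoc a p)
  with layered show ?case by (auto simp: layered_graph_def path_end_snoc)
qed

lemma lay_path_end_take:
  "length p \<le> n \<Longrightarrow> set p \<subseteq> Sin \<Longrightarrow> t \<le> length p \<Longrightarrow> lay (path_end delta r (take t p)) = t"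
  using path_end_in_layer[of "take t p"] by (auto dest: in_set_takeD)

lemma lay_L_layer: "v \<in> L_layer Sin delta r C w eps i \<Longrightarrow> i \<le> n \<Longrightarrow> lay v = i"
  using path_end_in_layer by (auto simp: L_layer_def)

definition crowded_layers :: "'b list \<Rightarrow> nat set" where
  "crowded_layers w = {i\<in>{1..n}. 2 \<le> card (L_layer Sin delta r C w eps i)}"

lemma crowded_layers_subset: "crowded_layers w \<subseteq> {1..n}"
  by (auto simp: crowded_layers_def)

lemma card_uncrowded_layers:
  "card {i\<in>{1..n}. card (L_layer Sin delta r C w eps i) \<le> 1} = n - card (crowded_layers w)"
proof -
  have "{i\<in>{1..n}. card (L_layer Sin delta r C w eps i) \<le> 1} = {1..n} - crowded_layers w"
    by (auto simp: crowded_layers_def)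
  moreover have "finite (crowded_layers w)"
    using crowded_layers_subset by (rule finite_subset) simp
  ultimately show ?thesis
    using crowded_layers_subset by (simp add: card_Diff_subset)
qed

definition paths :: "nat \<Rightarrow> 'v \<Rightarrow> 'a list set" where
  "paths k x = {p. length p = k \<and> set p \<subseteq> Sin \<and> path_end delta r p = x}"

lemma finite_paths: "finite (paths k x)"
  unfolding paths_def
  by (rule finite_subset[OF _ finite_lists_length_eq[OF finite_Sin, of k]]) auto

lemma paths_0: "paths 0 x = (if x = r then {[]} else {})"
  by (auto simp: paths_def)

lemma mem_L_layer_iff:
  assumes "1 \<le> i" "i \<le> length w"
  shows "v \<in> L_layer Sin delta r C w eps i \<longleftrightarrow> (\<exists>p\<in>paths i v. 0 < score w p)"
proof -
  have "sfx_dist (code_word delta C r p) (take i w) < 1 - eps \<longleftrightarrow> 0 < score w p"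
    if "length p = i" for p
  proof -
    from that assms have "p \<noteq> []" "length p \<le> length w"
      by auto
    with that show ?thesis
      using sfx_dist_less_iff_score_pos[of p w] by simp
  qed
  then show ?thesis
    unfolding L_layer_def paths_def by blast
qed

definition extensions :: "('v \<Rightarrow> 'a list) \<Rightarrow> nat \<Rightarrow> 'v \<Rightarrow> 'a list set" where
  "extensions f k x = {f y @ [a] | y a. f y \<in> paths k y \<and> a \<in> Sin \<and> delta y a = x}"

lemma extensions_subset_paths: "extensions f k x \<subseteq> paths (Suc k) x"
  by (auto simp: extensions_def paths_def path_end_snoc)

primrec best :: "'b list \<Rightarrow> nat \<Rightarrow> 'v \<Rightarrow> 'a list" where
  "best w 0 x = []"
| "best w (Suc k) x = arg_max_on (score w) (extensions (best w k) k x)"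

lemma extension_dominates:
  assumes best_k: "\<And>y. paths k y \<noteq> {} \<Longrightarrow>
      best w k y \<in> paths k y \<and> (\<forall>q\<in>paths k y. score w q \<le> score w (best w k y))"
    and p: "p \<in> paths (Suc k) x"
  shows "\<exists>q\<in>extensions (best w k) k x. score w p \<le> score w q"
proof -
  obtain p0 a where p0: "p = p0 @ [a]"
    using p by (cases p rule: rev_exhaust) (auto simp: paths_def)
  let ?y = "path_end delta r p0"
  have "p0 \<in> paths k ?y" "a \<in> Sin" "delta ?y a = x"
    using p by (auto simp: p0 paths_def path_end_snoc)
  with best_k[of ?y] have best_y: "best w k ?y \<in> paths k ?y" "score w p0 \<le> score w (best w k ?y)"
    by auto
  show ?thesis
  proof
    show "best w k ?y @ [a] \<in> extensions (best w k) k x"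
      using best_y \<open>a \<in> Sin\<close> \<open>delta ?y a = x\<close> unfolding extensions_def by blast
    show "score w p \<le> score w (best w k ?y @ [a])"
      using best_y \<open>p0 \<in> paths k ?y\<close> by (auto simp: p0 score_snoc paths_def)
  qed
qed

lemma best_in_paths:
  "paths k x \<noteq> {} \<Longrightarrow>
    best w k x \<in> paths k x \<and> (\<forall>p\<in>paths k x. score w p \<le> score w (best w k x))"
proof (induction k arbitrary: x)
  case 0
  then show ?case
    by (simp add: paths_0 split: if_splits)
next
  case (Suc k)
  let ?E = "extensions (best w k) k x"
  have "finite ?E"
    using finite_paths extensions_subset_paths by (rule finite_subset[rotated])
  moreover have dominated: "\<forall>p\<in>paths (Suc k) x. \<exists>q\<in>?E. score w p \<le> score w q"
    using extension_dominates Suc.IH by blast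
  moreover from this Suc.prems have "?E \<noteq> {}"
    by blast
  ultimately have "best w (Suc k) x \<in> ?E" "\<forall>q\<in>?E. score w q \<le> score w (best w (Suc k) x)"
    using arg_max_on_if_finite[of ?E "score w"] by auto
  with dominated extensions_subset_paths show ?case
    by (meson order_trans subsetD)
qed

lemma best_Suc_in_extensions:
  "paths (Suc k) x \<noteq> {} \<Longrightarrow> best w (Suc k) x \<in> extensions (best w k) k x"
proof -
  assume "paths (Suc k) x \<noteq> {}"
  then have "extensions (best w k) k x \<noteq> {}"
    using extension_dominates[OF best_in_paths] by blast
  moreover have "finite (extensions (best w k) k x)"
    using finite_paths extensions_subset_paths by (rule finite_subset[rotated])
  ultimately show ?thesis
    using arg_max_on_if_finite by auto
qed

lemma take_best:
  "paths k x \<noteq> {} \<Longrightarrow> i \<le> k \<Longrightarrow>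
    take i (best w k x) = best w i (path_end delta r (take i (best w k x)))"
proof (induction k arbitrary: x)
  case 0
  then show ?case by simp
next
  case (Suc k)
  show ?case
  proof (cases "i = Suc k")
    case True
    with best_in_paths[OF Suc.prems(1)] show ?thesis
      by (simp add: paths_def)
  next
    case False
    obtain y a where y: "best w (Suc k) x = best w k y @ [a]" "best w k y \<in> paths k y"
      using best_Suc_in_extensions[of k x w] Suc.prems(1) by (auto simp: extensions_def)
    with False Suc.prems(2) have "take i (best w (Suc k) x) = take i (best w k y)"
      by (simp add: paths_def)
    moreover have "take i (best w k y) = best w i (path_end delta r (take i (best w k y)))"
      using Suc.IH[of y] y(2) False Suc.prems(2) by auto
    ultimately show ?thesis
      by simp
  qed
qed

end

locale sensitivity_witness = layered_code r delta C eps Sin n V lay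
  for r :: 'v and delta :: "'v \<Rightarrow> 'a \<Rightarrow> 'v" and C :: "'v \<Rightarrow> 'a \<Rightarrow> 'b" and eps Sin n V lay +
  fixes Sout :: "'b set" and w :: "'b list" and m :: nat and deepest :: 'v and a0 :: 'a
  assumes is_code: "is_code Sin Sout n V lay C"
    and length_w: "length w = n" and set_w: "set w \<subseteq> Sout"
    and eps_pos: "0 < eps" and eps_less_1: "eps < 1"
    and a0_in: "a0 \<in> Sin"
    and deepest_in: "deepest \<in> L_layer Sin delta r C w eps m" and m_pos: "1 \<le> m" and m_le: "m \<le> n"
    and m_max: "\<And>i. i \<in> {1..n} \<Longrightarrow> L_layer Sin delta r C w eps i \<noteq> {} \<Longrightarrow> i \<le> m"
begin

abbreviation L :: "'v set" where
  "L \<equiv> L_all Sin n delta r C w eps"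

definition B :: "'v \<Rightarrow> 'a list" where
  "B v = best w (lay v) v"

definition Z :: "'a list" where
  "Z = B deepest @ replicate (n - m) a0"

definition T :: "('v \<times> 'a) set" where
  "T = (\<Union>v\<in>L. path_edges delta r (B v))"

definition covered :: "nat \<Rightarrow> bool" where
  "covered t \<longleftrightarrow> (\<exists>e\<in>T. lay (fst e) = t \<and> C (fst e) (snd e) = w ! t)"

definition w' :: "'b list" where
  "w' = map (\<lambda>t. if covered t then w ! t else C (path_end delta r (take t Z)) (Z ! t)) [0..<n]"

definition P :: "'v \<Rightarrow> 'a list" where
  "P v = (if v = path_end delta r Z then Z else B v)"

definition H :: "('v \<times> 'a) set" where
  "H = (\<Union>v\<in>insert (path_end delta r Z) L. path_edges delta r (P v))"

lemma B_in_paths: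
  assumes "v \<in> L"
  shows "lay v \<in> {1..m} \<and> B v \<in> paths (lay v) v \<and> 0 < score w (B v)"
proof -
  obtain i where i: "i \<in> {1..n}" "v \<in> L_layer Sin delta r C w eps i"
    using assms by (auto simp: L_all_def)
  then have lay_v: "lay v = i" "i \<le> m"
    using lay_L_layer[of v w i] m_max[of i] by auto
  obtain p where "p \<in> paths i v" "0 < score w p"
    using i mem_L_layer_iff[of i w v] length_w by auto
  with best_in_paths[of i v w] have "B v \<in> paths i v \<and> 0 < score w (B v)"
    by (force simp: B_def lay_v)
  with i lay_v show ?thesis
    by simp
qed

lemma length_B: "v \<in> L \<Longrightarrow> length (B v) = lay v"
  using B_in_paths by (simp add: paths_def)

lemma lay_B_prefix: "v \<in> L \<Longrightarrow> t \<le> lay v \<Longrightarrow> lay (path_end delta r (take t (B v))) = t"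
  using B_in_paths[of v] m_le by (intro lay_path_end_take) (auto simp: paths_def)

lemma take_B: "v \<in> L \<Longrightarrow> i \<le> lay v \<Longrightarrow> take i (B v) = best w i (path_end delta r (take i (B v)))"
  using B_in_paths[of v] take_best[of "lay v" v i w] by (auto simp: B_def)

lemma deepest_in_L: "deepest \<in> L" and lay_deepest: "lay deepest = m"
  using deepest_in m_pos m_le lay_L_layer by (auto simp: L_all_def)

lemma length_Z: "length Z = n" and set_Z: "set Z \<subseteq> Sin"
  using B_in_paths[OF deepest_in_L] a0_in m_le by (auto simp: Z_def paths_def lay_deepest)

lemma take_Z: "i \<le> m \<Longrightarrow> take i Z = take i (B deepest)"
  by (simp add: Z_def length_B[OF deepest_in_L] lay_deepest)

lemma lay_Z_prefix: "t \<le> n \<Longrightarrow> lay (path_end delta r (take t Z)) = t"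
  using length_Z set_Z by (intro lay_path_end_take) auto

lemma T_below_m: "e \<in> T \<Longrightarrow> lay (fst e) < m"
  using lay_B_prefix length_B B_in_paths by (fastforce simp: T_def mem_path_edges_iff)

lemma B_edge_in_T: "v \<in> L \<Longrightarrow> t < lay v \<Longrightarrow> (path_end delta r (take t (B v)), B v ! t) \<in> T"
  unfolding T_def using length_B by (auto simp: mem_path_edges_iff)

lemma nth_w': "t < n \<Longrightarrow> w' ! t = (if covered t then w ! t else C (path_end delta r (take t Z)) (Z ! t))"
  by (simp add: w'_def)

lemma length_w': "length w' = n"
  by (simp add: w'_def)

lemma set_w': "set w' \<subseteq> Sout"
proof
  fix b
  assume "b \<in> set w'"
  then obtain t where t: "t < n" "b = w' ! t"
    by (auto simp: in_set_conv_nth length_w')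
  show "b \<in> Sout"
  proof (cases "covered t")
    case True
    with t set_w length_w show ?thesis
      by (auto simp: nth_w')
  next
    case False
    have "path_end delta r (take t Z) \<in> V" "Z ! t \<in> Sin"
      using path_end_in_layer[of "take t Z"] length_Z set_Z t(1) by (auto dest: in_set_takeD)
    with t False is_code lay_Z_prefix[of t] show ?thesis
      by (simp add: nth_w' is_code_def)
  qed
qed

lemma covered_if_agrees:
  assumes "v \<in> L" "t < lay v" "agrees w (B v) t"
  shows "covered t"
  unfolding covered_def
  by (rule bexI[OF _ B_edge_in_T[OF assms(1,2)]])
    (use assms lay_B_prefix[of v t] in \<open>simp add: agrees_def\<close>)

lemma score_w'_B: "v \<in> L \<Longrightarrow> 0 < score w' (B v)"
proof -
  assume v: "v \<in> L"
  have "agrees w' (B v) t" if "t < length (B v)" "agrees w (B v) t" for t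
  proof -
    have "t < n"
      using that(1) length_B[OF v] B_in_paths[OF v] m_le by auto
    with that covered_if_agrees[OF v, of t] length_B[OF v] show ?thesis
      by (simp add: agrees_def nth_w')
  qed
  then have "score w (B v) \<le> score w' (B v)"
    by (rule score_mono)
  with B_in_paths[OF v] show ?thesis
    by simp
qed

lemma score_w'_Z: "0 < score w' Z"
  unfolding Z_def
proof (rule score_pos_append[OF eps_less_1 score_w'_B[OF deepest_in_L]])
  fix t
  assume "length (B deepest) \<le> t" "t < length (B deepest @ replicate (n - m) a0)"
  then have "m \<le> t" "t < n"
    using length_B[OF deepest_in_L] length_Z by (simp_all add: lay_deepest Z_def)
  then have "\<not> covered t"
    using T_below_m by (force simp: covered_def)
  with \<open>t < n\<close> show "agrees w' (B deepest @ replicate (n - m) a0) t"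
    by (simp add: agrees_def nth_w' Z_def)
qed

lemma B_end_Z: "path_end delta r Z \<in> L \<Longrightarrow> B (path_end delta r Z) = Z"
proof -
  assume "path_end delta r Z \<in> L"
  moreover have "lay (path_end delta r Z) = n"
    using lay_Z_prefix[of n] length_Z by simp
  ultimately have "n - m = 0"
    using B_in_paths by fastforce
  then have "Z = B deepest"
    by (simp add: Z_def)
  moreover have "path_end delta r (B deepest) = deepest"
    using B_in_paths[OF deepest_in_L] by (simp add: paths_def)
  ultimately show ?thesis
    by simp
qed

lemma P_in_paths:
  assumes "v \<in> insert (path_end delta r Z) L"
  shows "P v \<in> paths (lay v) v \<and> lay v \<in> {1..n} \<and> 0 < score w' (P v)"
proof (cases "v = path_end delta r Z")
  case True
  moreover have "lay (path_end delta r Z) = n"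
    using lay_Z_prefix[of n] length_Z by simp
  ultimately show ?thesis
    using length_Z set_Z m_pos m_le score_w'_Z by (simp add: P_def paths_def)
next
  case False
  with assms have "v \<in> L" "P v = B v"
    by (auto simp: P_def)
  with B_in_paths[of v] score_w'_B[of v] m_le show ?thesis
    by auto
qed

lemma P_eq_B: "v \<in> L \<Longrightarrow> P v = B v"
  using B_end_Z by (auto simp: P_def)

lemma T_subset_H: "T \<subseteq> H"
  unfolding T_def H_def using P_eq_B by auto

lemma path_edges_Z_subset_H: "path_edges delta r Z \<subseteq> H"
proof -
  have "P (path_end delta r Z) = Z"
    by (simp add: P_def)
  then show ?thesis
    unfolding H_def by (metis UN_upper insertI1)
qed

lemma finite_H: "finite H"
proof -
  have "finite L"
    by (simp add: L_all_def finite_L_layer[OF finite_Sin])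
  then show ?thesis
    unfolding H_def by (intro finite_UN_I) auto
qed

definition choice :: "'v \<Rightarrow> 'a list" where
  "choice x = (if lay x \<le> m then best w (lay x) x else take (lay x) Z)"

lemma take_B_eq_choice:
  assumes "v \<in> L" "i \<le> lay v"
  shows "take i (B v) = choice (path_end delta r (take i (B v)))"
proof -
  have "lay (path_end delta r (take i (B v))) = i" "i \<le> m"
    using assms lay_B_prefix B_in_paths[OF assms(1)] by auto
  then have "choice (path_end delta r (take i (B v))) = best w i (path_end delta r (take i (B v)))"
    by (simp add: choice_def)
  with take_B[OF assms] show ?thesis
    by (simp only:)
qed

lemma take_Z_eq_choice:
  assumes "i \<le> n"
  shows "take i Z = choice (path_end delta r (take i Z))"
proof (cases "i \<le> m")
  case True
  then show ?thesis
    using take_B_eq_choice[OF deepest_in_L, of i] by (simp add: take_Z lay_deepest)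
next
  case False
  with assms show ?thesis
    by (simp add: choice_def lay_Z_prefix)
qed

lemma tree_edges_H: "tree_edges delta H"
proof -
  have "take i q = choice (path_end delta r (take i q))"
    if "q \<in> P ` insert (path_end delta r Z) L" "i \<le> length q" for q i
    using that take_Z_eq_choice take_B_eq_choice length_Z length_B
    by (auto simp: P_def split: if_splits)
  then have "tree_edges delta (\<Union>q\<in>P ` insert (path_end delta r Z) L. path_edges delta r q)"
    by (rule tree_edges_UN_path_edges)
  then show ?thesis
    by (simp add: H_def image_image)
qed

lemma H_in_prefix_trees: "H \<in> prefix_trees Sin n lay delta r C w' eps"
proof -
  let ?S = "insert (path_end delta r Z) L"
  have P_props: "set (P v) \<subseteq> Sin \<and> length (P v) = lay v \<and> path_end delta r (P v) = v \<and>
      sfx_dist (code_word delta C r (P v)) (take (length (P v)) w') < 1 - eps" if "v \<in> ?S" for v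
  proof -
    from P_in_paths[OF that] have "P v \<in> paths (lay v) v" "lay v \<in> {1..n}" "0 < score w' (P v)"
      by auto
    moreover from this have "P v \<noteq> []" "length (P v) \<le> length w'"
      by (auto simp: paths_def length_w')
    ultimately show ?thesis
      using sfx_dist_less_iff_score_pos[of "P v" w'] by (simp add: paths_def)
  qed
  have S_subset: "?S \<subseteq> L_all Sin n delta r C w' eps"
  proof
    fix v
    assume v: "v \<in> ?S"
    with P_in_paths have "P v \<in> paths (lay v) v" "lay v \<in> {1..n}" "0 < score w' (P v)"
      by auto
    then have "v \<in> L_layer Sin delta r C w' eps (lay v)"
      using mem_L_layer_iff[of "lay v" w' v] length_w' by auto
    with \<open>lay v \<in> {1..n}\<close> show "v \<in> L_all Sin n delta r C w' eps"
      by (auto simp: L_all_def)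
  qed
  show ?thesis
    unfolding prefix_trees_def mem_Collect_eq
  proof (intro exI[of _ ?S] exI[of _ P] conjI)
    show "\<forall>v\<in>?S. set (P v) \<subseteq> Sin \<and> length (P v) = lay v \<and> path_end delta r (P v) = v \<and>
        sfx_dist (code_word delta C r (P v)) (take (length (P v)) w') < 1 - eps"
      using P_props by blast
  qed (use S_subset tree_edges_H in \<open>simp_all add: H_def\<close>)
qed

lemma last_edge_of_B:
  assumes "v \<in> L_layer Sin delta r C w eps (Suc t)" "t < n"
  defines "e \<equiv> (path_end delta r (take t (B v)), B v ! t)"
  shows "e \<in> H \<and> lay (fst e) = t \<and> delta (fst e) (snd e) = v \<and> C (fst e) (snd e) = w' ! t"
proof -
  have v: "v \<in> L" "lay v = Suc t"
    using assms lay_L_layer[of v w "Suc t"] by (auto simp: L_all_def)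
  have "e \<in> T" "lay (fst e) = t"
    using B_edge_in_T[OF v(1)] lay_B_prefix[OF v(1)] by (simp_all add: e_def v(2))
  moreover have "delta (fst e) (snd e) = v"
    using B_in_paths[OF v(1)] path_end_take_Suc[of t "B v" delta r] by (simp add: e_def v(2) paths_def)
  moreover have "agrees w (B v) t"
    using eps_pos B_in_paths[OF v(1)] length_B[OF v(1)] v(2) by (intro agrees_last_if_score_pos) auto
  then have "C (fst e) (snd e) = w' ! t"
    using covered_if_agrees[OF v(1)] assms(2) v(2) by (simp add: e_def agrees_def nth_w')
  ultimately show ?thesis
    using T_subset_H by auto
qed

lemma agreeing_edge_in_layer:
  assumes "t < n"
  shows "\<exists>e\<in>H. lay (fst e) = t \<and> C (fst e) (snd e) = w' ! t"
proof (cases "covered t")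
  case True
  with assms T_subset_H show ?thesis
    by (auto simp: covered_def nth_w')
next
  case False
  let ?e = "(path_end delta r (take t Z), Z ! t)"
  have "?e \<in> path_edges delta r Z"
    using assms length_Z unfolding mem_path_edges_iff by auto
  then have "?e \<in> H"
    using path_edges_Z_subset_H by blast
  with False assms show ?thesis
    by (intro bexI[of _ ?e]) (simp_all add: lay_Z_prefix nth_w')
qed

lemma agr_lower_bound: "n + card (crowded_layers w) \<le> agr lay C w' H"
proof -
  define A where "A = {e\<in>H. C (fst e) (snd e) = w' ! lay (fst e)}"
  have "finite A"
    using finite_H by (simp add: A_def)
  have layer_count: "1 + of_bool (Suc t \<in> crowded_layers w) \<le> card {e\<in>A. lay (fst e) = t}" if "t < n" for t
  proof (cases "Suc t \<in> crowded_layers w")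
    case True
    then have "\<not> card (L_layer Sin delta r C w eps (Suc t)) \<le> Suc 0"
      by (simp add: crowded_layers_def)
    then obtain u v where uv: "u \<in> L_layer Sin delta r C w eps (Suc t)"
      "v \<in> L_layer Sin delta r C w eps (Suc t)" "u \<noteq> v"
      using card_le_Suc0_iff_eq[OF finite_L_layer[OF finite_Sin, of delta r C w eps "Suc t"]] by blast
    let ?e = "\<lambda>v. (path_end delta r (take t (B v)), B v ! t)"
    have e_layer: "?e x \<in> {e\<in>A. lay (fst e) = t}" "delta (fst (?e x)) (snd (?e x)) = x"
      if "x \<in> L_layer Sin delta r C w eps (Suc t)" for x
      using last_edge_of_B[OF that \<open>t < n\<close>] by (simp_all add: A_def)
    have "?e u \<noteq> ?e v"
      using e_layer(2)[OF uv(1)] e_layer(2)[OF uv(2)] uv(3) by metis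
    moreover have "card {?e u, ?e v} \<le> card {e\<in>A. lay (fst e) = t}"
      using \<open>finite A\<close> e_layer(1)[OF uv(1)] e_layer(1)[OF uv(2)] by (intro card_mono) auto
    ultimately show ?thesis
      using True by simp
  next
    case False
    obtain e where "e \<in> A" "lay (fst e) = t"
      using agreeing_edge_in_layer[OF \<open>t < n\<close>] by (auto simp: A_def)
    then have "{e\<in>A. lay (fst e) = t} \<noteq> {}"
      by blast
    with False \<open>finite A\<close> show ?thesis
      by (simp add: card_gt_0_iff Suc_le_eq)
  qed
  have "crowded_layers w \<subseteq> {Suc 0..n}"
    by (auto simp: crowded_layers_def)
  have "(\<Sum>t<n. of_bool (Suc t \<in> crowded_layers w)) = (\<Sum>i=Suc 0..n. of_bool (i \<in> crowded_layers w) :: nat)"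
    by (rule sum.atLeast1_atMost_eq[symmetric])
  also have "\<dots> = card (crowded_layers w)"
    using \<open>crowded_layers w \<subseteq> {Suc 0..n}\<close> by (simp add: Int_absorb1)
  finally have "(\<Sum>t<n. of_bool (Suc t \<in> crowded_layers w)) = card (crowded_layers w)" .
  then have "n + card (crowded_layers w) = (\<Sum>t<n. 1 + of_bool (Suc t \<in> crowded_layers w))"
    by (subst sum.distrib) (simp del: sum_of_bool_eq)
  also have "\<dots> \<le> (\<Sum>t<n. card {e\<in>A. lay (fst e) = t})"
    using layer_count by (intro sum_mono) simp
  also have "\<dots> \<le> card A"
    using \<open>finite A\<close> by (rule sum_card_fibres_le_card) simp
  finally show ?thesis
    by (simp add: A_def agr_def)
qed

lemma violating_prefix_tree:
  "\<exists>w'' H'. length w'' = n \<and> set w'' \<subseteq> Sout \<and> H' \<in> prefix_trees Sin n lay delta r C w'' eps \<and>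
    n + card (crowded_layers w) \<le> agr lay C w'' H'"
  using length_w' set_w' H_in_prefix_trees agr_lower_bound by blast

end

context layered_code
begin

lemma card_crowded_layers_le:
  assumes "is_code Sin Sout n V lay C" "eps_sensitive Sin Sout n lay delta r C eps"
    and "0 < eps" "Sin \<noteq> {}" "length w = n" "set w \<subseteq> Sout"
  shows "real (card (crowded_layers w)) \<le> eps * real n"
proof -
  let ?nonempty = "{i\<in>{1..n}. L_layer Sin delta r C w eps i \<noteq> {}}"
  consider "1 \<le> eps" | "?nonempty = {}" | "eps < 1" "?nonempty \<noteq> {}"
    by fastforce
  then show ?thesis
  proof cases
    case 1
    have "card (crowded_layers w) \<le> card {1..n}"
      using crowded_layers_subset by (intro card_mono) auto
    then have "real (card (crowded_layers w)) \<le> 1 * real n"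
      by simp
    also have "\<dots> \<le> eps * real n"
      using 1 by (intro mult_right_mono) auto
    finally show ?thesis .
  next
    case 2
    then have "crowded_layers w = {}"
      by (auto simp: crowded_layers_def)
    with assms(3) show ?thesis
      by simp
  next
    case 3
    define m where "m = Max ?nonempty"
    have "m \<in> ?nonempty"
      unfolding m_def using 3 by (intro Max_in) auto
    then obtain deepest where deepest: "deepest \<in> L_layer Sin delta r C w eps m" and m: "1 \<le> m" "m \<le> n"
      by auto
    have m_max: "i \<le> m" if "i \<in> {1..n}" "L_layer Sin delta r C w eps i \<noteq> {}" for i
      unfolding m_def using that by (intro Max_ge) auto
    obtain a0 where "a0 \<in> Sin"
      using assms(4) by blast
    interpret sensitivity_witness r delta C eps Sin n V lay Sout w m deepest a0
      by unfold_locales (use assms 3 deepest m m_max \<open>a0 \<in> Sin\<close> in simp_all)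
    obtain w'' H' where w'': "length w'' = n" "set w'' \<subseteq> Sout"
      "H' \<in> prefix_trees Sin n lay delta r C w'' eps" "n + card (crowded_layers w) \<le> agr lay C w'' H'"
      using violating_prefix_tree by blast
    have "real (agr lay C w'' H') \<le> (1 + eps) * real n"
      using assms(2) w''(1-3) unfolding eps_sensitive_def by blast
    moreover have "real n + real (card (crowded_layers w)) \<le> real (agr lay C w'' H')"
      using w''(4) by linarith
    ultimately show ?thesis
      by (simp add: algebra_simps)
  qed
qed

end

theorem lemma5p12:
  fixes Sin :: "'a set" and Sout :: "'b set" and n :: nat
    and V :: "'v set" and lay :: "'v \<Rightarrow> nat" and r :: 'v and delta :: "'v \<Rightarrow> 'a \<Rightarrow> 'v"
    and C :: "'v \<Rightarrow> 'a \<Rightarrow> 'b" and eps :: real and w :: "'b list"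
  assumes "finite Sin" and "Sin \<noteq> {}"
    and "layered_graph Sin n V lay r delta"
    and "is_code Sin Sout n V lay C"
    and "eps > 0"
    and "eps_sensitive Sin Sout n lay delta r C eps"
    and "length w = n" and "set w \<subseteq> Sout"
  shows "(1 - eps) * real n \<le> real (card {i \<in> {1..n}. card (L_layer Sin delta r C w eps i) \<le> 1})"
proof -
  interpret layered_code r delta C eps Sin n V lay
    using assms(1,3) by unfold_locales
  have "card (crowded_layers w) \<le> n"
    using card_mono[OF finite_atLeastAtMost crowded_layers_subset] by simp
  moreover have "real (card (crowded_layers w)) \<le> eps * real n"
    using card_crowded_layers_le assms(2,4-8) by blast
  ultimately show ?thesis
    unfolding card_uncrowded_layers by (simp add: algebra_simps of_nat_diff)
qed

end
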